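(* In the setting of ONES (step $\theta>0$, $\widetilde w_1\in\triangle^n$ with positive entries, arbitrary $\ell_t,\widehat\ell_t\in\mathbb R^{n+1}$, updates $\widetilde w_{t+1}=\mathscr N(\widetilde w_t\circ e^{-\theta\ell_t})$, $w_{t+1}=\mathscr N(\widetilde w_{t+1}\circ e^{-\theta\widehat\ell_{t+1}})$), for every $T\ge1$ and every $w\in\triangle^n$, $$\sum_{t=1}^T\langle \ell_t,w_t-w\rangle\le \frac1\theta\sum_i w(i)\ln\frac{w(i)}{\widetilde w_1(i)}+\frac\theta2\sum_{t=1}^T h_{\|\ell_t\|_\infty}\big(\|\ell_t-\widehat\ell_t\|_\infty\big),$$ where $h_\sigma(\delta)=\delta^2-(|\delta|-|\sigma|)_+^2$.
   Context: $\triangle^n=\{w\in\mathbb R_+^{n+1}:\|w\|_1=1\}$; $\circ$ is the Hadamard product; $\mathscr N(u)=u/\|u\|_1$; $w_1=\mathscr N(\widetilde w_1\circ e^{-\theta\widehat\ell_1})$; $(a)_+=\max\{a,0\}$; $0\ln0=0$. *)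

theory Defs
  imports Complex_Main
begin

text \<open>Vectors in R^(n+1) are functions nat => real, only coordinates 0..n matter.\<close>

definition nrm :: "nat \<Rightarrow> (nat \<Rightarrow> real) \<Rightarrow> (nat \<Rightarrow> real)" where
  "nrm n u = (\<lambda>i. u i / (\<Sum>j\<le>n. \<bar>u j\<bar>))"

definition in_simplex :: "nat \<Rightarrow> (nat \<Rightarrow> real) \<Rightarrow> bool" where
  "in_simplex n w \<longleftrightarrow> (\<forall>i\<le>n. 0 \<le> w i) \<and> (\<Sum>i\<le>n. w i) = 1"

definition inner_n :: "nat \<Rightarrow> (nat \<Rightarrow> real) \<Rightarrow> (nat \<Rightarrow> real) \<Rightarrow> real" where
  "inner_n n u v = (\<Sum>i\<le>n. u i * v i)"

definition sup_norm :: "nat \<Rightarrow> (nat \<Rightarrow> real) \<Rightarrow> real" where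
  "sup_norm n u = Max ((\<lambda>i. \<bar>u i\<bar>) ` {..n})"

definition hfun :: "real \<Rightarrow> real \<Rightarrow> real" where
  "hfun \<sigma> \<delta> = \<delta>\<^sup>2 - (max (\<bar>\<delta>\<bar> - \<bar>\<sigma>\<bar>) 0)\<^sup>2"

text \<open>ones_wt n theta w1 l t = tilde w_t for t >= 1 (t = 0 also set to w1, unused).\<close>
fun ones_wt :: "nat \<Rightarrow> real \<Rightarrow> (nat \<Rightarrow> real) \<Rightarrow> (nat \<Rightarrow> nat \<Rightarrow> real) \<Rightarrow> nat \<Rightarrow> nat \<Rightarrow> real" where
  "ones_wt n \<theta> w1 l 0 = w1"
| "ones_wt n \<theta> w1 l (Suc 0) = w1"
| "ones_wt n \<theta> w1 l (Suc (Suc t)) =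
     nrm n (\<lambda>i. ones_wt n \<theta> w1 l (Suc t) i * exp (- \<theta> * l (Suc t) i))"

definition ones_w :: "nat \<Rightarrow> real \<Rightarrow> (nat \<Rightarrow> real) \<Rightarrow> (nat \<Rightarrow> nat \<Rightarrow> real) \<Rightarrow> (nat \<Rightarrow> nat \<Rightarrow> real) \<Rightarrow> nat \<Rightarrow> nat \<Rightarrow> real" where
  "ones_w n \<theta> w1 l lh t = nrm n (\<lambda>i. ones_wt n \<theta> w1 l t i * exp (- \<theta> * lh t i))"

end

(*
  Both iterates are Gibbs tilts of w~_1: w~_(t+1) is proportional to w~_1 * exp (-theta L_t)
  with L_t = l_1 + ... + l_t, and w_t to w~_t * exp (-theta lh_t).  With the potential
  Phi_t = ln (sum_i w~_1 i * exp (-theta L_t i)), every round satisfies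
    theta <l_t, w_t> + Phi_t - Phi_(t-1) <= theta^2/2 * h_sigma(delta),
  sigma = |l_t|_inf, delta = |d|_inf, d = l_t - lh_t.  To see this, split d = s d + (1 - s) d
  with s = min 1 (sigma / delta) and pass through q ~ w~_t * exp (-theta (l_t - s d)):
  Hoeffding's lemma gives Phi_t - Phi_(t-1) <= -theta <l_t, q> + theta^2 s^2 delta^2 / 2, and
  since w_t is the tilt of q by theta (1 - s) d, a change of measure (Gibbs variational
  inequality plus Hoeffding) moves the mean of l_t by at most theta (1 - s) delta sigma.
  Summing telescopes, and the variational inequality for w gives
  -Phi_T <= theta <L_T, w> + KL(w || w~_1).
*)
theory Submission
  imports Defs "HOL-Probability.Hoeffding"
begin

definition gibbs :: "nat \<Rightarrow> (nat \<Rightarrow> real) \<Rightarrow> (nat \<Rightarrow> real) \<Rightarrow> nat \<Rightarrow> real" where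
  "gibbs n p f = nrm n (\<lambda>i. p i * exp (f i))"

(* Since ln 0 = 0, coordinates with r i = 0 contribute 0, as with the convention 0 ln 0 = 0. *)
definition kl_div :: "nat \<Rightarrow> (nat \<Rightarrow> real) \<Rightarrow> (nat \<Rightarrow> real) \<Rightarrow> real" where
  "kl_div n r q = (\<Sum>i\<le>n. r i * ln (r i / q i))"

lemma sum_mult_exp_pos:
  fixes p f :: "nat \<Rightarrow> real"
  assumes "\<forall>i\<le>n. 0 < p i"
  shows "0 < (\<Sum>i\<le>n. p i * exp (f i))"
  using assms by (intro sum_pos) auto

lemma gibbs_eq:
  assumes "\<forall>i\<le>n. 0 \<le> p i"
  shows "gibbs n p f = (\<lambda>i. p i * exp (f i) / (\<Sum>j\<le>n. p j * exp (f j)))"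
  unfolding gibbs_def nrm_def using assms by (simp add: abs_of_nonneg)

lemma gibbs_pos:
  assumes "\<forall>i\<le>n. 0 < p i" and "i \<le> n"
  shows "0 < gibbs n p f i"
  using assms sum_mult_exp_pos[OF assms(1)] by (simp add: gibbs_eq less_imp_le)

lemma in_simplex_gibbs:
  assumes "\<forall>i\<le>n. 0 < p i"
  shows "in_simplex n (gibbs n p f)"
proof -
  have "(\<Sum>i\<le>n. gibbs n p f i) = (\<Sum>i\<le>n. p i * exp (f i)) / (\<Sum>j\<le>n. p j * exp (f j))"
    using assms by (simp add: gibbs_eq less_imp_le flip: sum_divide_distrib)
  also have "\<dots> = 1"
    using sum_mult_exp_pos[OF assms, of f] by simp
  finally show ?thesis
    using gibbs_pos[OF assms] by (simp add: in_simplex_def less_imp_le)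
qed

lemma gibbs_zero:
  assumes "in_simplex n p" and "\<forall>i\<le>n. g i = 0" and "i \<le> n"
  shows "gibbs n p g i = p i"
proof -
  have "(\<Sum>j\<le>n. p j * exp (g j)) = 1"
    using assms by (simp add: in_simplex_def)
  then show ?thesis
    using assms by (simp add: gibbs_eq in_simplex_def)
qed

lemma sum_mult_exp_add:
  assumes "\<forall>i\<le>n. 0 < p i"
  shows "(\<Sum>i\<le>n. p i * exp (f i + g i))
    = (\<Sum>i\<le>n. p i * exp (f i)) * (\<Sum>i\<le>n. gibbs n p f i * exp (g i))"
proof -
  define Z where "Z = (\<Sum>i\<le>n. p i * exp (f i))"
  have "Z > 0"
    unfolding Z_def by (rule sum_mult_exp_pos[OF assms])
  have "Z * (\<Sum>i\<le>n. gibbs n p f i * exp (g i)) = (\<Sum>i\<le>n. Z * (p i * exp (f i) / Z * exp (g i)))"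
    using assms by (simp add: gibbs_eq less_imp_le Z_def[symmetric] sum_distrib_left)
  also have "\<dots> = (\<Sum>i\<le>n. p i * exp (f i + g i))"
    using \<open>Z > 0\<close> by (simp add: exp_add mult.assoc)
  finally show ?thesis
    unfolding Z_def by simp
qed

lemma gibbs_gibbs:
  assumes "\<forall>i\<le>n. 0 < p i"
  shows "gibbs n (gibbs n p f) g = gibbs n p (\<lambda>i. f i + g i)"
proof
  fix i
  define Z where "Z = (\<Sum>i\<le>n. p i * exp (f i))"
  define Z' where "Z' = (\<Sum>i\<le>n. gibbs n p f i * exp (g i))"
  have "Z > 0"
    unfolding Z_def by (rule sum_mult_exp_pos[OF assms])
  have sum_fg: "(\<Sum>i\<le>n. p i * exp (f i + g i)) = Z * Z'"
    unfolding Z_def Z'_def by (rule sum_mult_exp_add[OF assms])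
  have "gibbs n (gibbs n p f) g i = p i * exp (f i) / Z * exp (g i) / Z'"
    using gibbs_pos[OF assms] assms
    by (simp add: gibbs_eq[of n "gibbs n p f"] less_imp_le Z'_def[symmetric], simp add: gibbs_eq less_imp_le Z_def)
  also have "\<dots> = p i * exp (f i + g i) / (\<Sum>j\<le>n. p j * exp (f j + g j))"
    unfolding sum_fg by (simp add: exp_add)
  also have "\<dots> = gibbs n p (\<lambda>i. f i + g i) i"
    using assms by (simp add: gibbs_eq less_imp_le)
  finally show "gibbs n (gibbs n p f) g i = gibbs n p (\<lambda>i. f i + g i) i" .
qed

lemma kl_div_gibbs:
  assumes "\<forall>i\<le>n. 0 < p i"
  shows "kl_div n (gibbs n p f) p
    = (\<Sum>i\<le>n. gibbs n p f i * f i) - ln (\<Sum>i\<le>n. p i * exp (f i))"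
proof -
  define Z where "Z = (\<Sum>i\<le>n. p i * exp (f i))"
  have Z: "Z > 0"
    unfolding Z_def by (rule sum_mult_exp_pos[OF assms])
  have "kl_div n (gibbs n p f) p = (\<Sum>i\<le>n. gibbs n p f i * (f i - ln Z))"
    unfolding kl_div_def
  proof (rule sum.cong)
    fix i assume "i \<in> {..n}"
    with assms Z show "gibbs n p f i * ln (gibbs n p f i / p i) = gibbs n p f i * (f i - ln Z)"
      by (simp add: gibbs_eq less_imp_le Z_def[symmetric] ln_div)
  qed simp
  also have "\<dots> = (\<Sum>i\<le>n. gibbs n p f i * f i) - ln Z"
    using in_simplex_gibbs[OF assms, of f]
    by (simp add: right_diff_distrib sum_subtractf sum_distrib_right[symmetric] in_simplex_def)
  finally show ?thesis
    unfolding Z_def .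
qed

lemma exp_le_chord:
  fixes a b y :: real
  assumes "a \<le> y" and "y \<le> b" and "a < b"
  shows "exp y \<le> ((b - y) * exp a + (y - a) * exp b) / (b - a)"
proof -
  define t where "t = (y - a) / (b - a)"
  have "b - a \<noteq> 0"
    using assms by simp
  have "0 \<le> t" and "t \<le> 1"
    using assms by (auto simp: t_def divide_simps)
  have "t * (b - a) = y - a"
    using assms by (simp add: t_def)
  then have "y = (1 - t) *\<^sub>R a + t *\<^sub>R b"
    by (simp add: algebra_simps)
  then have "exp y \<le> (1 - t) * exp a + t * exp b"
    using convex_onD[OF exp_convex] \<open>0 \<le> t\<close> \<open>t \<le> 1\<close> by simp
  also have "1 - t = (b - y) / (b - a)"
    using assms by (simp add: t_def field_simps)
  also have "(b - y) / (b - a) * exp a + t * exp b = ((b - y) * exp a + (y - a) * exp b) / (b - a)"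
    by (simp add: t_def add_divide_distrib)
  finally show ?thesis .
qed

lemma hoeffding_lemma_finite:
  fixes q y :: "nat \<Rightarrow> real"
  assumes q: "in_simplex n q" and y: "\<forall>i\<le>n. a \<le> y i \<and> y i \<le> b"
  shows "ln (\<Sum>i\<le>n. q i * exp (y i)) \<le> (\<Sum>i\<le>n. q i * y i) + (b - a)\<^sup>2 / 8"
proof -
  define \<mu> where "\<mu> = (\<Sum>i\<le>n. q i * y i)"
  have sum1: "(\<Sum>i\<le>n. q i) = 1"
    using q by (simp add: in_simplex_def)
  have sum_q: "(\<Sum>i\<le>n. q i * c) = c" for c
    using sum1 by (simp flip: sum_distrib_right)
  have mono: "(\<Sum>i\<le>n. q i * u i) \<le> (\<Sum>i\<le>n. q i * v i)" if "\<forall>i\<le>n. u i \<le> v i" for u v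
    using q that by (intro sum_mono mult_left_mono) (auto simp: in_simplex_def)
  have "a \<le> \<mu>" and "\<mu> \<le> b"
    using mono[of "\<lambda>_. a" y] mono[of y "\<lambda>_. b"] y by (auto simp: \<mu>_def sum_q)
  have "exp a \<le> (\<Sum>i\<le>n. q i * exp (y i))"
    using mono[of "\<lambda>_. exp a" "\<lambda>i. exp (y i)"] y by (simp add: sum_q)
  then have pos: "0 < (\<Sum>i\<le>n. q i * exp (y i))"
    using exp_gt_zero[of a] by linarith
  show ?thesis
  proof (cases "a = b")
    case True
    then have "\<forall>i\<le>n. y i = a"
      using y by force
    then have "(\<Sum>i\<le>n. q i * exp (y i)) = exp a" and "\<mu> = a"
      using sum_q[of "exp a"] sum_q[of a] unfolding \<mu>_def by (metis (no_types, lifting) atMost_iff sum.cong)+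
    then show ?thesis
      by (simp add: \<mu>_def)
  next
    case False
    then have "a < b"
      using \<open>a \<le> \<mu>\<close> \<open>\<mu> \<le> b\<close> by linarith
    define s where "s = (\<mu> - a) / (b - a)"
    have "0 \<le> s"
      using \<open>a \<le> \<mu>\<close> \<open>a < b\<close> by (simp add: s_def)
    have "(\<Sum>i\<le>n. q i * exp (y i))
        \<le> (\<Sum>i\<le>n. q i * (((b - y i) * exp a + (y i - a) * exp b) / (b - a)))"
      using y \<open>a < b\<close> by (intro mono) (auto intro: exp_le_chord)
    also have "\<dots> = ((b - \<mu>) * exp a + (\<mu> - a) * exp b) / (b - a)"
      using sum1 \<open>a < b\<close>
      by (simp add: \<mu>_def algebra_simps sum.distrib sum_subtractf
          flip: sum_divide_distrib sum_distrib_left sum_distrib_right)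
    also have "\<dots> = exp a * (1 + s * (exp (b - a) - 1))"
      using \<open>a < b\<close> by (simp add: s_def field_simps exp_diff)
    finally have le: "(\<Sum>i\<le>n. q i * exp (y i)) \<le> exp a * (1 + s * (exp (b - a) - 1))" .
    have "ln (\<Sum>i\<le>n. q i * exp (y i)) \<le> ln (exp a * (1 + s * (exp (b - a) - 1)))"
      using le pos by simp
    also have "\<dots> = a + ln (1 + s * (exp (b - a) - 1))"
    proof -
      have "0 < exp a * (1 + s * (exp (b - a) - 1))"
        using pos le by linarith
      then show ?thesis
        by (simp add: ln_mult zero_less_mult_iff)
    qed
    also have "\<dots> \<le> a + (b - a) * s + (b - a)\<^sup>2 / 8"
      using Hoeffdings_lemma_aux[of "b - a" s] \<open>a < b\<close> \<open>0 \<le> s\<close> by (simp add: algebra_simps)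
    also have "(b - a) * s = \<mu> - a"
      using \<open>a < b\<close> by (simp add: s_def)
    finally show ?thesis
      by (simp add: \<mu>_def)
  qed
qed

lemma gibbs_variational_ineq:
  fixes r q f :: "nat \<Rightarrow> real"
  assumes r: "in_simplex n r" and q: "\<forall>i\<le>n. 0 < q i"
  shows "(\<Sum>i\<le>n. r i * f i) \<le> kl_div n r q + ln (\<Sum>i\<le>n. q i * exp (f i))"
proof -
  define Z where "Z = (\<Sum>i\<le>n. q i * exp (f i))"
  have "Z > 0"
    unfolding Z_def by (rule sum_mult_exp_pos[OF q])
  have termwise: "r i * f i - r i * ln (r i / q i) - r i * ln Z \<le> q i * exp (f i) / Z - r i"
    if "i \<le> n" for i
  proof (cases "r i = 0")
    case True
    have "q i > 0"
      using q that by simp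
    then show ?thesis
      using True \<open>Z > 0\<close> by simp
  next
    case False
    then have "r i > 0" and "q i > 0"
      using r q that by (auto simp: in_simplex_def order_le_less)
    define x where "x = q i * exp (f i) / (Z * r i)"
    have "x > 0"
      using \<open>r i > 0\<close> \<open>q i > 0\<close> \<open>Z > 0\<close> by (simp add: x_def)
    have "ln x = f i - ln (r i / q i) - ln Z"
      using \<open>r i > 0\<close> \<open>q i > 0\<close> \<open>Z > 0\<close> by (simp add: x_def ln_mult ln_div)
    then have "r i * (f i - ln (r i / q i) - ln Z) \<le> r i * (x - 1)"
      using ln_le_minus_one[OF \<open>x > 0\<close>] \<open>r i > 0\<close> by simp
    then show ?thesis
      using \<open>r i > 0\<close> \<open>Z > 0\<close> by (simp add: x_def right_diff_distrib)
  qed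
  have "(\<Sum>i\<le>n. r i * f i - r i * ln (r i / q i) - r i * ln Z)
      \<le> (\<Sum>i\<le>n. q i * exp (f i) / Z - r i)"
    using termwise by (intro sum_mono) simp
  also have "\<dots> = 0"
    using r \<open>Z > 0\<close> by (simp add: sum_subtractf in_simplex_def Z_def flip: sum_divide_distrib)
  finally show ?thesis
    using r by (simp add: sum_subtractf kl_div_def Z_def in_simplex_def flip: sum_distrib_right)
qed

lemma kl_div_nonneg:
  assumes "in_simplex n r" and "in_simplex n q" and "\<forall>i\<le>n. 0 < q i"
  shows "0 \<le> kl_div n r q"
  using gibbs_variational_ineq[OF assms(1,3), of "\<lambda>_. 0"] assms(2) by (simp add: in_simplex_def)

lemma ln_sum_exp_le_gibbs_mean:
  assumes "in_simplex n p" and "\<forall>i\<le>n. 0 < p i"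
  shows "ln (\<Sum>i\<le>n. p i * exp (f i)) \<le> (\<Sum>i\<le>n. gibbs n p f i * f i)"
  using kl_div_nonneg[OF in_simplex_gibbs[OF assms(2)] assms] kl_div_gibbs[OF assms(2)] by simp

lemma ln_sum_exp_add_le:
  assumes "in_simplex n p" and "\<forall>i\<le>n. 0 < p i" and "\<forall>i\<le>n. a \<le> g i \<and> g i \<le> b"
  shows "ln (\<Sum>i\<le>n. p i * exp (f i + g i))
    \<le> (\<Sum>i\<le>n. gibbs n p f i * (f i + g i)) + (b - a)\<^sup>2 / 8"
proof -
  have "0 < (\<Sum>i\<le>n. gibbs n p f i * exp (g i))"
    using gibbs_pos[OF assms(2)] by (intro sum_mult_exp_pos) simp
  then have "ln (\<Sum>i\<le>n. p i * exp (f i + g i))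
      = ln (\<Sum>i\<le>n. p i * exp (f i)) + ln (\<Sum>i\<le>n. gibbs n p f i * exp (g i))"
    using sum_mult_exp_pos[OF assms(2), of f] by (simp add: sum_mult_exp_add[OF assms(2)] ln_mult)
  also have "\<dots> \<le> (\<Sum>i\<le>n. gibbs n p f i * f i) + ((\<Sum>i\<le>n. gibbs n p f i * g i) + (b - a)\<^sup>2 / 8)"
    using ln_sum_exp_le_gibbs_mean[OF assms(1,2)]
      hoeffding_lemma_finite[OF in_simplex_gibbs[OF assms(2)] assms(3)] by (rule add_mono)
  finally show ?thesis
    by (simp add: distrib_left sum.distrib)
qed

lemma kl_div_gibbs_le:
  assumes q: "in_simplex n q" "\<forall>i\<le>n. 0 < q i" and g: "\<forall>i\<le>n. a \<le> g i \<and> g i \<le> b"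
  shows "kl_div n (gibbs n q g) q \<le> (b - a)\<^sup>2 / 8"
proof -
  define Z where "Z = (\<Sum>i\<le>n. q i * exp (g i))"
  have "Z > 0"
    unfolding Z_def by (rule sum_mult_exp_pos[OF q(2)])
  have "Z * (\<Sum>i\<le>n. gibbs n q g i * exp (- g i)) = 1"
    using sum_mult_exp_add[OF q(2), of g "\<lambda>i. - g i"] q(1) by (simp add: Z_def in_simplex_def)
  then have "(\<Sum>i\<le>n. gibbs n q g i * exp (- g i)) = 1 / Z"
    using \<open>Z > 0\<close> by (simp add: eq_divide_eq mult.commute)
  then have "- ln Z = ln (\<Sum>i\<le>n. gibbs n q g i * exp (- g i))"
    using \<open>Z > 0\<close> by (simp add: ln_div)
  also have "\<dots> \<le> (\<Sum>i\<le>n. gibbs n q g i * - g i) + (- a - - b)\<^sup>2 / 8"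
    using g by (intro hoeffding_lemma_finite[OF in_simplex_gibbs[OF q(2)]]) auto
  finally show ?thesis
    using kl_div_gibbs[OF q(2), of g] by (simp add: Z_def sum_negf)
qed

lemma gibbs_mean_shift_le:
  fixes q g l :: "nat \<Rightarrow> real"
  assumes q: "in_simplex n q" "\<forall>i\<le>n. 0 < q i"
    and g: "\<forall>i\<le>n. \<bar>g i\<bar> \<le> c" and l: "\<forall>i\<le>n. \<bar>l i\<bar> \<le> \<sigma>"
  shows "(\<Sum>i\<le>n. gibbs n q g i * l i) - (\<Sum>i\<le>n. q i * l i) \<le> c * \<sigma>"
proof (cases "c = 0 \<or> \<sigma> = 0")
  case True
  then have "(\<forall>i\<le>n. l i = 0) \<or> (\<forall>i\<le>n. gibbs n q g i = q i)"
    using g l gibbs_zero[OF q(1)] by force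
  then have "(\<Sum>i\<le>n. gibbs n q g i * l i) = (\<Sum>i\<le>n. q i * l i)"
    by (metis (no_types, lifting) atMost_iff mult_zero_right sum.cong)
  then show ?thesis
    using True by auto
next
  case False
  moreover have "\<bar>g 0\<bar> \<le> c" and "\<bar>l 0\<bar> \<le> \<sigma>"
    using g l by simp_all
  ultimately have "c > 0" and "\<sigma> > 0"
    by (smt (verit) abs_ge_zero)+
  define t where "t = c / \<sigma>"
  have "t > 0" and "t * \<sigma> = c"
    using \<open>c > 0\<close> \<open>\<sigma> > 0\<close> by (simp_all add: t_def)
  have "t * (\<Sum>i\<le>n. gibbs n q g i * l i)
      \<le> kl_div n (gibbs n q g) q + ln (\<Sum>i\<le>n. q i * exp (t * l i))"
    using gibbs_variational_ineq[OF in_simplex_gibbs[OF q(2), of g] q(2), of "\<lambda>i. t * l i"]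
    by (simp add: sum_distrib_left mult_ac)
  also have "\<dots> \<le> (c - - c)\<^sup>2 / 8 + ((\<Sum>i\<le>n. q i * (t * l i)) + (t * \<sigma> - - (t * \<sigma>))\<^sup>2 / 8)"
  proof (rule add_mono)
    show "kl_div n (gibbs n q g) q \<le> (c - - c)\<^sup>2 / 8"
      using g by (intro kl_div_gibbs_le[OF q]) (auto simp: abs_le_iff)
    have "\<bar>t * l i\<bar> \<le> t * \<sigma>" if "i \<le> n" for i
      using l that \<open>t > 0\<close> by (simp add: abs_mult mult_left_mono)
    then show "ln (\<Sum>i\<le>n. q i * exp (t * l i))
        \<le> (\<Sum>i\<le>n. q i * (t * l i)) + (t * \<sigma> - - (t * \<sigma>))\<^sup>2 / 8"
      by (intro hoeffding_lemma_finite[OF q(1)]) (simp add: abs_le_iff minus_le_iff)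
  qed
  also have "\<dots> = t * ((\<Sum>i\<le>n. q i * l i) + c * \<sigma>)"
    using \<open>t * \<sigma> = c\<close> by (simp add: sum_distrib_left power2_eq_square algebra_simps)
  finally show ?thesis
    using \<open>t > 0\<close> by simp
qed

lemma hfun_eq_min:
  assumes "0 \<le> \<sigma>" and "0 \<le> \<delta>"
  shows "hfun \<sigma> \<delta> = 2 * (1 - min 1 (\<sigma> / \<delta>)) * \<delta> * \<sigma> + (min 1 (\<sigma> / \<delta>) * \<delta>)\<^sup>2"
proof (cases "\<delta> \<le> \<sigma>")
  case True
  then have "min 1 (\<sigma> / \<delta>) = 1 \<or> \<delta> = 0"
    using assms by (auto simp: min_def le_divide_eq)
  then show ?thesis
    using True assms by (auto simp: hfun_def)
next
  case False
  then have "min 1 (\<sigma> / \<delta>) = \<sigma> / \<delta>" and "\<delta> > 0"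
    using assms by (auto simp: min_def divide_le_eq)
  then show ?thesis
    using False assms by (simp add: hfun_def power2_eq_square field_simps)
qed

lemma abs_le_sup_norm: "i \<le> n \<Longrightarrow> \<bar>u i\<bar> \<le> sup_norm n u"
  unfolding sup_norm_def by (rule Max_ge) auto

lemma sup_norm_nonneg: "0 \<le> sup_norm n u"
  using abs_le_sup_norm[of 0 n u] by simp

lemma ones_step_bound:
  fixes p l lh :: "nat \<Rightarrow> real"
  assumes "0 < \<theta>" and p: "in_simplex n p" "\<forall>i\<le>n. 0 < p i"
  shows "\<theta> * inner_n n l (gibbs n p (\<lambda>i. - \<theta> * lh i)) + ln (\<Sum>i\<le>n. p i * exp (- \<theta> * l i))
    \<le> \<theta>\<^sup>2 / 2 * hfun (sup_norm n l) (sup_norm n (\<lambda>i. l i - lh i))"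
proof -
  define d where "d = (\<lambda>i. l i - lh i)"
  define \<sigma> where "\<sigma> = sup_norm n l"
  define \<delta> where "\<delta> = sup_norm n d"
  define s where "s = min 1 (\<sigma> / \<delta>)"
  have "0 \<le> \<sigma>" and "0 \<le> \<delta>"
    unfolding \<sigma>_def \<delta>_def by (rule sup_norm_nonneg)+
  then have "0 \<le> s" and "s \<le> 1"
    by (simp_all add: s_def)
  define q where "q = gibbs n p (\<lambda>i. - \<theta> * (l i - s * d i))"
  have q: "in_simplex n q" "\<forall>i\<le>n. 0 < q i"
    unfolding q_def using in_simplex_gibbs[OF p(2)] gibbs_pos[OF p(2)] by auto
  have tilt: "gibbs n p (\<lambda>i. - \<theta> * lh i) = gibbs n q (\<lambda>i. \<theta> * (1 - s) * d i)"
    unfolding q_def gibbs_gibbs[OF p(2)] by (simp add: d_def algebra_simps)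
  have "ln (\<Sum>i\<le>n. p i * exp (- \<theta> * l i))
      = ln (\<Sum>i\<le>n. p i * exp (- \<theta> * (l i - s * d i) + - \<theta> * s * d i))"
    by (simp add: algebra_simps)
  also have "\<dots> \<le> (\<Sum>i\<le>n. q i * (- \<theta> * l i)) + (\<theta> * s * \<delta> - - (\<theta> * s * \<delta>))\<^sup>2 / 8"
  proof -
    have "\<bar>\<theta> * s * d i\<bar> \<le> \<theta> * s * \<delta>" if "i \<le> n" for i
      using abs_le_sup_norm[OF that, of d] \<open>0 < \<theta>\<close> \<open>0 \<le> s\<close>
      by (simp add: \<delta>_def abs_mult mult_left_mono)
    then show ?thesis
      using ln_sum_exp_add_le[OF p, where a = "- (\<theta> * s * \<delta>)" and b = "\<theta> * s * \<delta>"
          and g = "\<lambda>i. - \<theta> * s * d i" and f = "\<lambda>i. - \<theta> * (l i - s * d i)"]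
      by (simp add: q_def abs_le_iff minus_le_iff algebra_simps)
  qed
  finally have ln_le: "ln (\<Sum>i\<le>n. p i * exp (- \<theta> * l i))
      \<le> - \<theta> * (\<Sum>i\<le>n. q i * l i) + \<theta>\<^sup>2 / 2 * (s * \<delta>)\<^sup>2"
    by (simp add: sum_distrib_left power2_eq_square algebra_simps)
  have "(\<Sum>i\<le>n. gibbs n q (\<lambda>i. \<theta> * (1 - s) * d i) i * l i) - (\<Sum>i\<le>n. q i * l i)
      \<le> \<theta> * (1 - s) * \<delta> * \<sigma>"
  proof (rule gibbs_mean_shift_le[OF q])
    show "\<forall>i\<le>n. \<bar>\<theta> * (1 - s) * d i\<bar> \<le> \<theta> * (1 - s) * \<delta>"
      using abs_le_sup_norm[of _ n d] \<open>0 < \<theta>\<close> \<open>s \<le> 1\<close>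
      by (simp add: \<delta>_def abs_mult mult_left_mono)
    show "\<forall>i\<le>n. \<bar>l i\<bar> \<le> \<sigma>"
      using abs_le_sup_norm[of _ n l] by (simp add: \<sigma>_def)
  qed
  then have "\<theta> * ((\<Sum>i\<le>n. gibbs n q (\<lambda>i. \<theta> * (1 - s) * d i) i * l i) - (\<Sum>i\<le>n. q i * l i))
      \<le> \<theta> * (\<theta> * (1 - s) * \<delta> * \<sigma>)"
    using \<open>0 < \<theta>\<close> by (simp only: mult_le_cancel_left_pos)
  moreover have "inner_n n l (gibbs n p (\<lambda>i. - \<theta> * lh i))
      = (\<Sum>i\<le>n. gibbs n q (\<lambda>i. \<theta> * (1 - s) * d i) i * l i)"
    unfolding inner_n_def tilt by (simp add: mult.commute)
  ultimately have "\<theta> * inner_n n l (gibbs n p (\<lambda>i. - \<theta> * lh i)) + ln (\<Sum>i\<le>n. p i * exp (- \<theta> * l i))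
      \<le> \<theta> * (\<theta> * (1 - s) * \<delta> * \<sigma>) + \<theta>\<^sup>2 / 2 * (s * \<delta>)\<^sup>2"
    using ln_le by (simp add: right_diff_distrib)
  also have "\<dots> = \<theta>\<^sup>2 / 2 * hfun \<sigma> \<delta>"
    unfolding hfun_eq_min[OF \<open>0 \<le> \<sigma>\<close> \<open>0 \<le> \<delta>\<close>] s_def[symmetric]
    by (simp add: power2_eq_square algebra_simps)
  finally show ?thesis
    by (simp add: \<sigma>_def \<delta>_def d_def)
qed

lemma ones_wt_eq_gibbs:
  assumes "in_simplex n w1" and "\<forall>i\<le>n. 0 < w1 i"
  shows "ones_wt n \<theta> w1 l (Suc T) = gibbs n w1 (\<lambda>i. - \<theta> * (\<Sum>t=1..T. l t i))"
proof (induction T)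
  case 0
  show ?case
    using assms(1) by (simp add: gibbs_eq in_simplex_def)
next
  case (Suc T)
  have "ones_wt n \<theta> w1 l (Suc (Suc T)) = gibbs n (ones_wt n \<theta> w1 l (Suc T)) (\<lambda>i. - \<theta> * l (Suc T) i)"
    by (simp add: gibbs_def)
  also have "\<dots> = gibbs n w1 (\<lambda>i. - \<theta> * (\<Sum>t=1..T. l t i) + - \<theta> * l (Suc T) i)"
    unfolding Suc.IH gibbs_gibbs[OF assms(2)] ..
  finally show ?case
    by (simp add: algebra_simps)
qed

lemma ones_potential_bound:
  assumes "0 < \<theta>" and w1: "in_simplex n w1" "\<forall>i\<le>n. 0 < w1 i"
  shows "(\<Sum>t=1..T. inner_n n (l t) (ones_w n \<theta> w1 l lh t))
    \<le> - (1 / \<theta>) * ln (\<Sum>i\<le>n. w1 i * exp (- \<theta> * (\<Sum>t=1..T. l t i)))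
      + (\<theta> / 2) * (\<Sum>t=1..T. hfun (sup_norm n (l t)) (sup_norm n (\<lambda>i. l t i - lh t i)))"
proof (induction T)
  case 0
  show ?case
    using w1(1) by (simp add: in_simplex_def)
next
  case (Suc T)
  define L where "L = (\<lambda>i. - \<theta> * (\<Sum>t=1..T. l t i))"
  define p where "p = ones_wt n \<theta> w1 l (Suc T)"
  have p_eq: "p = gibbs n w1 L"
    unfolding p_def L_def by (rule ones_wt_eq_gibbs[OF w1])
  have p: "in_simplex n p" "\<forall>i\<le>n. 0 < p i"
    unfolding p_eq using in_simplex_gibbs[OF w1(2)] gibbs_pos[OF w1(2)] by auto
  have potential_step: "ln (\<Sum>i\<le>n. w1 i * exp (- \<theta> * (\<Sum>t=1..Suc T. l t i)))
      = ln (\<Sum>i\<le>n. w1 i * exp (L i)) + ln (\<Sum>i\<le>n. p i * exp (- \<theta> * l (Suc T) i))"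
  proof -
    have "(\<Sum>i\<le>n. w1 i * exp (- \<theta> * (\<Sum>t=1..Suc T. l t i)))
        = (\<Sum>i\<le>n. w1 i * exp (L i + - \<theta> * l (Suc T) i))"
      by (simp add: L_def algebra_simps)
    then show ?thesis
      using sum_mult_exp_pos[OF w1(2), of L] sum_mult_exp_pos[OF p(2), of "\<lambda>i. - \<theta> * l (Suc T) i"]
      unfolding sum_mult_exp_add[OF w1(2)] p_eq by (simp add: ln_mult)
  qed
  have "\<theta> * inner_n n (l (Suc T)) (ones_w n \<theta> w1 l lh (Suc T)) + ln (\<Sum>i\<le>n. p i * exp (- \<theta> * l (Suc T) i))
      \<le> \<theta>\<^sup>2 / 2 * hfun (sup_norm n (l (Suc T))) (sup_norm n (\<lambda>i. l (Suc T) i - lh (Suc T) i))"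
    using ones_step_bound[OF \<open>0 < \<theta>\<close> p] by (simp add: ones_w_def p_def gibbs_def)
  with Suc.IH potential_step \<open>0 < \<theta>\<close> show ?case
    by (simp add: L_def field_simps power2_eq_square)
qed

theorem corollary3:
  fixes n :: nat and \<theta> :: real and w1 w :: "nat \<Rightarrow> real"
    and l lh :: "nat \<Rightarrow> nat \<Rightarrow> real" and T :: nat
  assumes "\<theta> > 0"
    and "in_simplex n w1" and "\<forall>i\<le>n. w1 i > 0"
    and "T \<ge> 1"
    and "in_simplex n w"
  shows "(\<Sum>t=1..T. inner_n n (l t) (\<lambda>i. ones_w n \<theta> w1 l lh t i - w i))
    \<le> (1 / \<theta>) * (\<Sum>i\<le>n. w i * ln (w i / w1 i))
      + (\<theta> / 2) * (\<Sum>t=1..T. hfun (sup_norm n (l t)) (sup_norm n (\<lambda>i. l t i - lh t i)))"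
proof -
  define L where "L = (\<lambda>i. \<Sum>t=1..T. l t i)"
  have "(\<Sum>t=1..T. inner_n n (l t) (\<lambda>i. ones_w n \<theta> w1 l lh t i - w i))
      = (\<Sum>t=1..T. inner_n n (l t) (ones_w n \<theta> w1 l lh t)) - (1 / \<theta>) * (\<Sum>i\<le>n. w i * (\<theta> * L i))"
    using \<open>\<theta> > 0\<close>
    by (simp add: inner_n_def L_def right_diff_distrib sum_subtractf sum_distrib_left mult_ac
        sum.swap[where A = "{..n}"])
  moreover have "- (\<Sum>i\<le>n. w i * (\<theta> * L i))
      \<le> kl_div n w w1 + ln (\<Sum>i\<le>n. w1 i * exp (- \<theta> * L i))"
    using gibbs_variational_ineq[OF assms(5,3), of "\<lambda>i. - \<theta> * L i"] by (simp add: sum_negf)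
  ultimately show ?thesis
    using ones_potential_bound[OF assms(1-3), of l lh T] \<open>\<theta> > 0\<close>
    by (simp add: kl_div_def L_def field_simps)
qed

end
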